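(* The function $\lambda\mapsto\epsilon(\lambda)$, $\lambda\ge1$, is positive, continuous, convex and strictly decreasing; and for every $x\in\mathbb{S}$ the same holds for $\lambda\mapsto\epsilon(\lambda,x)$, $\lambda\ge1$.
   Context: Let $\pi,q$ be probability densities with respect to a $\sigma$-finite measure $\mu$ on $\mathbb{X}$ with $q>0$ wherever $\pi>0$; $\pi(dx)=\pi(x)\mu(dx)$, $q(dx)=q(x)\mu(dx)$, $\mathbb{S}=\{\pi>0\}$, $w=\pi/q$ on $\mathbb{S}$ and $0$ elsewhere. For integer $N\ge1$ and $z_1\in\mathbb{S}$, $\epsilon(N,z_1)=\int_{\mathbb{X}^{N-1}}\frac{w(z_1)}{\sum_{i=1}^Nw(z_i)}\prod_{n=2}^Nq(dz_n)$ (so $\epsilon(1,z_1)=1$) and $\epsilon(N)=\int_{\mathbb{S}}\epsilon(N,z)\pi(dz)$. For real $\lambda\ge1$ with $\beta=\lfloor\lambda\rfloor+1-\lambda$: $\epsilon(\lambda,x)=\beta\epsilon(\lfloor\lambda\rfloor,x)+(1-\beta)\epsilon(\lfloor\lambda\rfloor+1,x)$ and $\epsilon(\lambda)=\beta\epsilon(\lfloor\lambda\rfloor)+(1-\beta)\epsilon(\lfloor\lambda\rfloor+1)$. *)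

theory Defs
  imports "HOL-Probability.Probability"
begin

definition iw :: "('a \<Rightarrow> real) \<Rightarrow> ('a \<Rightarrow> real) \<Rightarrow> 'a \<Rightarrow> real" where
  "iw p q x = (if p x > 0 then p x / q x else 0)"

definition supp_p :: "'a measure \<Rightarrow> ('a \<Rightarrow> real) \<Rightarrow> 'a set" where
  "supp_p M p = {x \<in> space M. p x > 0}"

definition epsN :: "'a measure \<Rightarrow> ('a \<Rightarrow> real) \<Rightarrow> ('a \<Rightarrow> real) \<Rightarrow> nat \<Rightarrow> 'a \<Rightarrow> real" where
  "epsN M p q N z1 =
     (\<integral>z. iw p q z1 / (iw p q z1 + (\<Sum>i\<in>{2..N}. iw p q (z i)))
        \<partial>(PiM {2..N} (\<lambda>_. density M (\<lambda>x. ennreal (q x)))))"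

definition epsAvgN :: "'a measure \<Rightarrow> ('a \<Rightarrow> real) \<Rightarrow> ('a \<Rightarrow> real) \<Rightarrow> nat \<Rightarrow> real" where
  "epsAvgN M p q N =
     (LINT z : supp_p M p | density M (\<lambda>x. ennreal (p x)). epsN M p q N z)"

definition epsL :: "'a measure \<Rightarrow> ('a \<Rightarrow> real) \<Rightarrow> ('a \<Rightarrow> real) \<Rightarrow> real \<Rightarrow> 'a \<Rightarrow> real" where
  "epsL M p q l x =
     (let b = real_of_int \<lfloor>l\<rfloor> + 1 - l
      in b * epsN M p q (nat \<lfloor>l\<rfloor>) x + (1 - b) * epsN M p q (nat \<lfloor>l\<rfloor> + 1) x)"

definition epsAvgL :: "'a measure \<Rightarrow> ('a \<Rightarrow> real) \<Rightarrow> ('a \<Rightarrow> real) \<Rightarrow> real \<Rightarrow> real" where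
  "epsAvgL M p q l =
     (let b = real_of_int \<lfloor>l\<rfloor> + 1 - l
      in b * epsAvgN M p q (nat \<lfloor>l\<rfloor>) + (1 - b) * epsAvgN M p q (nat \<lfloor>l\<rfloor> + 1))"

end

theory Submission
  imports Defs
begin

text \<open>Fix \<open>x \<in> S\<close>, put \<open>c = w(x) > 0\<close> and let \<open>W, W\<^sub>2, W\<^sub>3, \<dots>\<close> be independent
  weights \<open>w(Z)\<close> with \<open>Z \<sim> q\<close>. With \<open>\<phi>(s) = c / (c + s)\<close> and \<open>T\<^sub>N = W\<^sub>2 + \<dots> + W\<^sub>N\<close>
  we have \<open>\<epsilon>(N, x) = E \<phi>(T\<^sub>N)\<close> and, since \<open>T\<^sub>N\<^sub>+\<^sub>1 = T\<^sub>N + W\<close>,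
  \<open>\<epsilon>(N, x) - \<epsilon>(N + 1, x) = E D(T\<^sub>N)\<close> with \<open>D(s) = \<phi>(s) - E \<phi>(s + W)\<close>.
  \<open>D\<close> is positive because \<open>W > 0\<close> with positive probability, and antitone because
  \<open>\<phi>(s) - \<phi>(s + t) = c t / ((c + s) (c + s + t))\<close> decreases in \<open>s\<close>; hence
  \<open>E D(T\<^sub>N\<^sub>+\<^sub>1) = E D(T\<^sub>N + W) \<le> E D(T\<^sub>N)\<close>, so \<open>N \<mapsto> \<epsilon>(N, x)\<close> is a positive, strictly
  decreasing, convex sequence. Integrating over \<open>S\<close> against \<open>\<pi>\<close> preserves these three
  properties, and the piecewise linear interpolation of such a sequence is positive,
  continuous, convex and strictly decreasing on \<open>[1, \<infinity>)\<close>: every secant line of a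
  convex sequence lies below the interpolation.\<close>

definition secant :: "(nat \<Rightarrow> real) \<Rightarrow> nat \<Rightarrow> real \<Rightarrow> real" where
  "secant a n l = a n + (a (Suc n) - a n) * (l - real n)"

definition lin_interp :: "(nat \<Rightarrow> real) \<Rightarrow> real \<Rightarrow> real" where
  "lin_interp a l = (let b = real_of_int \<lfloor>l\<rfloor> + 1 - l
      in b * a (nat \<lfloor>l\<rfloor>) + (1 - b) * a (nat \<lfloor>l\<rfloor> + 1))"

lemma lin_interp_eq_secant:
  assumes "1 \<le> l" shows "lin_interp a l = secant a (nat \<lfloor>l\<rfloor>) l"
proof -
  have "real (nat \<lfloor>l\<rfloor>) = real_of_int \<lfloor>l\<rfloor>" using assms by simp
  then show ?thesis unfolding lin_interp_def secant_def Let_def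
    by (simp add: algebra_simps)
qed

lemma secant_Suc_diff:
  "secant a (Suc n) l - secant a n l
     = ((a (Suc (Suc n)) - a (Suc n)) - (a (Suc n) - a n)) * (l - real n - 1)"
  unfolding secant_def by (simp add: algebra_simps)

locale pos_convex_decseq =
  fixes a :: "nat \<Rightarrow> real"
  assumes pos: "1 \<le> n \<Longrightarrow> 0 < a n"
    and decreasing: "1 \<le> n \<Longrightarrow> a (Suc n) < a n"
    and convex: "1 \<le> n \<Longrightarrow> a (Suc n) - a n \<le> a (Suc (Suc n)) - a (Suc n)"
begin

lemma secant_le_secant_right:
  assumes "1 \<le> n" "n \<le> m" "real m \<le> l"
  shows "secant a n l \<le> secant a m l"
  using assms(2,3)
proof (induction m rule: dec_induct)
  case (step m)
  have "0 \<le> secant a (Suc m) l - secant a m l"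
    unfolding secant_Suc_diff using convex[of m] step assms(1) by (intro mult_nonneg_nonneg) auto
  with step show ?case by simp
qed simp

lemma secant_le_secant_left:
  assumes "1 \<le> m" "m \<le> n" "l \<le> real m + 1"
  shows "secant a n l \<le> secant a m l"
  using assms(2)
proof (induction n rule: dec_induct)
  case (step n)
  have "secant a (Suc n) l - secant a n l \<le> 0"
    unfolding secant_Suc_diff using convex[of n] step assms by (intro mult_nonneg_nonpos) auto
  with step show ?case by simp
qed simp

lemma secant_le_lin_interp:
  assumes "1 \<le> l" "1 \<le> n"
  shows "secant a n l \<le> lin_interp a l"
proof -
  define m where "m = nat \<lfloor>l\<rfloor>"
  have m: "1 \<le> m" "real m \<le> l" "l \<le> real m + 1"
    using assms(1) unfolding m_def by linarith+
  have "secant a n l \<le> secant a m l"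
    using m assms(2) by (cases "n \<le> m") (auto intro: secant_le_secant_right secant_le_secant_left)
  then show ?thesis using lin_interp_eq_secant[OF assms(1)] by (simp add: m_def)
qed

lemma lin_interp_pos:
  assumes "1 \<le> l" shows "0 < lin_interp a l"
proof -
  define b where "b = real_of_int \<lfloor>l\<rfloor> + 1 - l"
  have b: "0 < b" "b \<le> 1" unfolding b_def by linarith+
  have "1 \<le> nat \<lfloor>l\<rfloor>" using assms by linarith
  then have "0 < a (nat \<lfloor>l\<rfloor>)" "0 < a (nat \<lfloor>l\<rfloor> + 1)" by (auto intro!: pos)
  with b have "0 < b * a (nat \<lfloor>l\<rfloor>) + (1 - b) * a (nat \<lfloor>l\<rfloor> + 1)"
    by (simp add: add_pos_nonneg)
  then show ?thesis unfolding lin_interp_def b_def Let_def .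
qed

lemma lin_interp_strict_antimono:
  assumes "1 \<le> x" "x < y" shows "lin_interp a y < lin_interp a x"
proof -
  define m where "m = nat \<lfloor>y\<rfloor>"
  have m: "1 \<le> m" using assms unfolding m_def by linarith
  have "lin_interp a y = secant a m y" using lin_interp_eq_secant[of y] assms by (simp add: m_def)
  also have "\<dots> = secant a m x + (a (Suc m) - a m) * (y - x)"
    unfolding secant_def by (simp add: algebra_simps)
  also have "\<dots> < secant a m x"
    using decreasing[OF m] assms by (simp add: mult_neg_pos)
  also have "\<dots> \<le> lin_interp a x" using secant_le_lin_interp assms m by simp
  finally show ?thesis .
qed

lemma convex_on_lin_interp: "convex_on {1..} (lin_interp a)"
  unfolding convex_on_def
proof (intro conjI ballI allI impI)
  show "convex {1::real..}" by simp
  fix x y u v :: real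
  assume xy: "x \<in> {1..}" "y \<in> {1..}" and uv: "0 \<le> u" "0 \<le> v" "u + v = 1"
  define z where "z = u * x + v * y"
  have "u * 1 + v * 1 \<le> z" unfolding z_def using xy uv by (intro add_mono mult_left_mono) auto
  then have z: "1 \<le> z" using uv by simp
  define m where "m = nat \<lfloor>z\<rfloor>"
  have m: "1 \<le> m" using z unfolding m_def by linarith
  have "lin_interp a z = secant a m z" using lin_interp_eq_secant[OF z] by (simp add: m_def)
  also have "\<dots> = u * secant a m x + v * secant a m y"
    using uv unfolding z_def secant_def by (simp add: algebra_simps flip: distrib_right)
  also have "\<dots> \<le> u * lin_interp a x + v * lin_interp a y"
    using xy uv m by (intro add_mono mult_left_mono secant_le_lin_interp) auto
  finally show "lin_interp a (u *\<^sub>R x + v *\<^sub>R y) \<le> u * lin_interp a x + v * lin_interp a y"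
    by (simp add: z_def)
qed

lemma continuous_on_lin_interp: "continuous_on {1..} (lin_interp a)"
  unfolding continuous_on_eq_continuous_within
proof
  fix x :: real assume x: "x \<in> {1..}"
  show "continuous (at x within {1..}) (lin_interp a)"
  proof (cases "x = 1")
    case False
    have "continuous_on {1<..} (lin_interp a)"
      by (rule convex_on_continuous) (auto intro: convex_on_subset[OF convex_on_lin_interp])
    then have "isCont (lin_interp a) x"
      using x False by (auto simp: continuous_on_eq_continuous_at)
    then show ?thesis by (rule continuous_at_imp_continuous_within)
  next
    case True
    have "\<forall>\<^sub>F t in at x within {1..}. secant a 1 t = lin_interp a t"
      unfolding eventually_at
    proof (intro exI[of _ 1] conjI ballI impI)
      fix t :: real assume "t \<in> {1..}" "t \<noteq> x \<and> dist t x < 1"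
      then have "1 \<le> t" "nat \<lfloor>t\<rfloor> = 1" using True by (auto simp: dist_real_def) linarith
      then show "secant a 1 t = lin_interp a t" using lin_interp_eq_secant by simp
    qed simp
    moreover have "(secant a 1 \<longlongrightarrow> lin_interp a x) (at x within {1..})"
      using True lin_interp_eq_secant[of 1] unfolding secant_def by (auto intro!: tendsto_eq_intros)
    ultimately show ?thesis
      unfolding continuous_within by (rule Lim_transform_eventually[rotated])
  qed
qed

end

lemma (in finite_measure) integrable_bounded:
  fixes f :: "'a \<Rightarrow> real"
  assumes "f \<in> borel_measurable M" "\<And>x. x \<in> space M \<Longrightarrow> \<bar>f x\<bar> \<le> B"
  shows "integrable M f"
  using assms by (intro integrable_const_bound[where B=B] AE_I2) auto

lemma (in prob_space) abs_integral_le_bound: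
  fixes f :: "'a \<Rightarrow> real"
  assumes "f \<in> borel_measurable M" "\<And>x. x \<in> space M \<Longrightarrow> \<bar>f x\<bar> \<le> B"
  shows "\<bar>integral\<^sup>L M f\<bar> \<le> B"
proof -
  have f: "integrable M f" by (rule integrable_bounded[OF assms])
  have bound: "- B \<le> f x" "f x \<le> B" if "x \<in> space M" for x
    using assms(2)[OF that] by linarith+
  have "integral\<^sup>L M f \<le> B" "- B \<le> integral\<^sup>L M f"
    by (auto intro!: integral_le_const[OF f] integral_ge_const[OF f] AE_I2 bound)
  then show ?thesis by simp
qed

lemma prob_space_density:
  assumes "f \<in> borel_measurable M" "(\<integral>\<^sup>+ x. f x \<partial>M) = 1"
  shows "prob_space (density M f)"
proof (rule prob_spaceI)
  have "emeasure (density M f) (space M) = (\<integral>\<^sup>+ x. f x \<partial>M)"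
    using assms(1) by (auto simp: emeasure_density intro!: nn_integral_cong)
  then show "emeasure (density M f) (space (density M f)) = 1"
    using assms(2) by simp
qed

text \<open>\<open>share (w z\<^sub>1) s\<close> is the integrand of \<open>\<epsilon>(N, z\<^sub>1)\<close> at \<open>s = \<Sum>\<^sub>i\<^sub>\<ge>\<^sub>2 w(z\<^sub>i)\<close>. The cut-off
  \<open>max 0 s\<close> only makes \<open>share c\<close> bounded on all of \<open>\<real>\<close>; it is evaluated at nonnegative
  arguments only.\<close>
definition share :: "real \<Rightarrow> real \<Rightarrow> real" where
  "share c s = c / (c + max 0 s)"

lemma share_measurable [measurable]: "share c \<in> borel_measurable borel"
  unfolding share_def by measurable

lemma share_nonneg_arg: "0 \<le> s \<Longrightarrow> share c s = c / (c + s)"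
  unfolding share_def by simp

lemma share_pos: "0 < c \<Longrightarrow> 0 < share c s"
  unfolding share_def by simp

lemma abs_share_le: "0 < c \<Longrightarrow> \<bar>share c s\<bar> \<le> 1"
  unfolding share_def by (auto simp: field_simps)

lemma abs_share_diff_le: "0 < c \<Longrightarrow> \<bar>share c s - share c t\<bar> \<le> 2"
  using abs_share_le[of c s] abs_share_le[of c t] by linarith

lemma share_add_le:
  assumes "0 < c" "0 \<le> s" "0 \<le> t"
  shows "share c (s + t) \<le> share c s"
  using assms by (simp add: share_nonneg_arg divide_left_mono)

lemma share_add_less:
  assumes "0 < c" "0 \<le> s" "0 < t"
  shows "share c (s + t) < share c s"
  using assms by (simp add: share_nonneg_arg divide_strict_left_mono)

lemma share_diff_antimono:
  assumes "0 < c" "0 \<le> s" "s \<le> s'" "0 \<le> t"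
  shows "share c s' - share c (s' + t) \<le> share c s - share c (s + t)"
proof -
  have drop: "share c r - share c (r + t) = c * t / ((c + r) * (c + r + t))" if "0 \<le> r" for r
    using that assms by (simp add: share_nonneg_arg field_simps)
  have "c * t / ((c + s') * (c + s' + t)) \<le> c * t / ((c + s) * (c + s + t))"
    using assms by (intro divide_left_mono mult_mono mult_pos_pos) auto
  then show ?thesis using drop[of s] drop[of s'] assms by simp
qed

locale nonneg_weight = prob_space Q for Q :: "'a measure" +
  fixes W :: "'a \<Rightarrow> real"
  assumes W_measurable [measurable]: "W \<in> borel_measurable Q"
    and W_nonneg: "y \<in> space Q \<Longrightarrow> 0 \<le> W y"
    and W_pos_nonnull: "emeasure Q {y \<in> space Q. 0 < W y} \<noteq> 0"
begin

abbreviation sample :: "nat set \<Rightarrow> (nat \<Rightarrow> 'a) measure" where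
  "sample I \<equiv> PiM I (\<lambda>_. Q)"

lemma prob_space_sample: "prob_space (sample I)"
  by (intro prob_space_PiM prob_space_axioms)

lemma sum_W_nonneg: "z \<in> space (sample I) \<Longrightarrow> 0 \<le> (\<Sum>i\<in>I. W (z i))"
  by (intro sum_nonneg W_nonneg) (auto simp: space_PiM)

definition expect_shift :: "(real \<Rightarrow> real) \<Rightarrow> real \<Rightarrow> real" where
  "expect_shift g s = (\<integral>y. g (s + W y) \<partial>Q)"

definition expect_sum :: "nat \<Rightarrow> (real \<Rightarrow> real) \<Rightarrow> real" where
  "expect_sum N g = (\<integral>z. g (\<Sum>i\<in>{2..N}. W (z i)) \<partial>sample {2..N})"

lemma expect_shift_measurable [measurable]:
  assumes [measurable]: "g \<in> borel_measurable borel"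
  shows "expect_shift g \<in> borel_measurable borel"
  unfolding expect_shift_def by (rule borel_measurable_lebesgue_integral) measurable

lemma abs_expect_shift_le:
  assumes [measurable]: "g \<in> borel_measurable borel" and "\<And>s. \<bar>g s\<bar> \<le> B"
  shows "\<bar>expect_shift g s\<bar> \<le> B"
  unfolding expect_shift_def by (rule abs_integral_le_bound) (auto simp: assms)

lemma abs_expect_sum_le:
  assumes [measurable]: "g \<in> borel_measurable borel" and "\<And>s. \<bar>g s\<bar> \<le> B"
  shows "\<bar>expect_sum N g\<bar> \<le> B"
proof -
  interpret S: prob_space "sample {2..N}" by (rule prob_space_sample)
  show ?thesis unfolding expect_sum_def by (rule S.abs_integral_le_bound) (auto simp: assms)
qed

lemma expect_sum_Suc:
  assumes [measurable]: "g \<in> borel_measurable borel" and g: "\<And>s. \<bar>g s\<bar> \<le> B"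
    and "1 \<le> N"
  shows "expect_sum (Suc N) g = expect_sum N (expect_shift g)"
proof -
  interpret product_sigma_finite "\<lambda>_. Q"
    by (simp add: product_sigma_finite_def sigma_finite_measure_axioms)
  interpret S: prob_space "sample {2..Suc N}" by (rule prob_space_sample)
  have insert: "{2..Suc N} = insert (Suc N) {2..N}" using \<open>1 \<le> N\<close> by auto
  have "integrable (sample (insert (Suc N) {2..N})) (\<lambda>z. g (\<Sum>i\<in>insert (Suc N) {2..N}. W (z i)))"
    unfolding insert[symmetric] by (rule S.integrable_bounded[where B=B], measurable) (rule g)
  then have "expect_sum (Suc N) g
      = (\<integral>z. (\<integral>y. g (\<Sum>i\<in>insert (Suc N) {2..N}. W ((z(Suc N := y)) i)) \<partial>Q) \<partial>sample {2..N})"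
    unfolding expect_sum_def insert by (rule product_integral_insert[rotated 2]) auto
  also have "\<dots> = expect_sum N (expect_shift g)"
    unfolding expect_sum_def expect_shift_def insert by (simp add: add.commute)
  finally show ?thesis .
qed

lemma expect_sum_diff:
  assumes [measurable]: "g \<in> borel_measurable borel" "h \<in> borel_measurable borel"
    and "\<And>s. \<bar>g s\<bar> \<le> B" "\<And>s. \<bar>h s\<bar> \<le> B"
  shows "expect_sum N g - expect_sum N h = expect_sum N (\<lambda>s. g s - h s)"
proof -
  interpret S: prob_space "sample {2..N}" by (rule prob_space_sample)
  show ?thesis unfolding expect_sum_def
    by (rule Bochner_Integration.integral_diff[symmetric];
        rule S.integrable_bounded[where B=B]) (auto simp: assms)
qed

lemma expect_sum_mono:
  assumes [measurable]: "g \<in> borel_measurable borel" "h \<in> borel_measurable borel"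
    and "\<And>s. \<bar>g s\<bar> \<le> B" "\<And>s. \<bar>h s\<bar> \<le> B" and "\<And>s. 0 \<le> s \<Longrightarrow> g s \<le> h s"
  shows "expect_sum N g \<le> expect_sum N h"
proof -
  interpret S: prob_space "sample {2..N}" by (rule prob_space_sample)
  show ?thesis unfolding expect_sum_def
    by (rule integral_mono; (rule S.integrable_bounded[where B=B])?)
       (auto simp: assms intro!: assms(5) sum_W_nonneg)
qed

lemma expect_sum_pos:
  assumes [measurable]: "g \<in> borel_measurable borel"
    and "\<And>s. \<bar>g s\<bar> \<le> B" and "\<And>s. 0 \<le> s \<Longrightarrow> 0 < g s"
  shows "0 < expect_sum N g"
proof -
  interpret S: prob_space "sample {2..N}" by (rule prob_space_sample)
  show ?thesis unfolding expect_sum_def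
    by (rule S.expectation_greater, rule S.integrable_bounded[where B=B])
       (auto simp: assms intro!: AE_I2 assms(3) sum_W_nonneg)
qed

definition share_decrement :: "real \<Rightarrow> real \<Rightarrow> real" where
  "share_decrement c s = share c s - expect_shift (share c) s"

lemma share_decrement_measurable [measurable]: "share_decrement c \<in> borel_measurable borel"
  unfolding share_decrement_def by measurable

lemma abs_share_decrement_le: "0 < c \<Longrightarrow> \<bar>share_decrement c s\<bar> \<le> 2"
  using abs_share_le[of c s] abs_expect_shift_le[OF share_measurable abs_share_le, of c s]
  unfolding share_decrement_def by linarith

lemma share_decrement_eq_integral:
  assumes "0 < c"
  shows "share_decrement c s = (\<integral>y. share c s - share c (s + W y) \<partial>Q)"
proof -
  have "integrable Q (\<lambda>y. share c (s + W y))"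
    by (rule integrable_bounded[where B=1]) (auto intro: abs_share_le assms)
  then show ?thesis
    unfolding share_decrement_def expect_shift_def by (simp add: prob_space)
qed

lemma share_decrement_pos:
  assumes "0 < c" "0 \<le> s"
  shows "0 < share_decrement c s"
proof -
  have "(\<integral>y. 0 \<partial>Q) < (\<integral>y. share c s - share c (s + W y) \<partial>Q)"
  proof (rule integral_less_AE[where A="{y \<in> space Q. 0 < W y}"])
    show "integrable Q (\<lambda>y. share c s - share c (s + W y))"
      by (intro integrable_bounded[where B=2]) (auto simp: abs_share_diff_le assms)
    show "AE y in Q. 0 \<le> share c s - share c (s + W y)"
      using share_add_le[OF assms] W_nonneg by (intro AE_I2) simp
    show "AE y in Q. y \<in> {y \<in> space Q. 0 < W y} \<longrightarrow> 0 \<noteq> share c s - share c (s + W y)"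
      using share_add_less[OF assms] by (intro AE_I2) force
  qed (use W_pos_nonnull in auto)
  then show ?thesis using share_decrement_eq_integral[OF assms(1)] by simp
qed

lemma share_decrement_antimono:
  assumes "0 < c" "0 \<le> s" "s \<le> s'"
  shows "share_decrement c s' \<le> share_decrement c s"
proof -
  have "(\<integral>y. share c s' - share c (s' + W y) \<partial>Q) \<le> (\<integral>y. share c s - share c (s + W y) \<partial>Q)"
    by (rule integral_mono; (rule integrable_bounded[where B=2])?)
       (auto simp: abs_share_diff_le assms W_nonneg intro!: share_diff_antimono)
  then show ?thesis using share_decrement_eq_integral[OF assms(1)] by simp
qed

lemma expect_shift_share_decrement_le:
  assumes "0 < c" "0 \<le> s"
  shows "expect_shift (share_decrement c) s \<le> share_decrement c s"
proof -
  have "expect_shift (share_decrement c) s \<le> (\<integral>y. share_decrement c s \<partial>Q)"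
    unfolding expect_shift_def
    by (rule integral_mono; (rule integrable_bounded[where B=2])?)
       (auto simp: abs_share_decrement_le assms W_nonneg intro!: share_decrement_antimono)
  then show ?thesis by (simp add: prob_space)
qed

lemma expect_sum_share_diff:
  assumes "0 < c" "1 \<le> N"
  shows "expect_sum N (share c) - expect_sum (Suc N) (share c) = expect_sum N (share_decrement c)"
  unfolding expect_sum_Suc[OF share_measurable abs_share_le[OF assms(1)] assms(2)] share_decrement_def
  by (rule expect_sum_diff[where B=1]) (auto intro: abs_share_le abs_expect_shift_le[OF share_measurable abs_share_le] assms)

theorem pos_convex_decseq_expect_sum_share:
  assumes "0 < c"
  shows "pos_convex_decseq (\<lambda>N. expect_sum N (share c))"
proof
  fix n :: nat assume n: "1 \<le> n"
  show "0 < expect_sum n (share c)"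
    by (rule expect_sum_pos[where B=1]) (auto intro: abs_share_le share_pos assms)
  have "0 < expect_sum n (share_decrement c)"
    by (rule expect_sum_pos[where B=2]) (auto intro: abs_share_decrement_le share_decrement_pos assms)
  then show "expect_sum (Suc n) (share c) < expect_sum n (share c)"
    using expect_sum_share_diff[OF assms n] by simp
  have "expect_sum (Suc n) (share_decrement c) = expect_sum n (expect_shift (share_decrement c))"
    by (rule expect_sum_Suc[OF share_decrement_measurable abs_share_decrement_le[OF assms] n])
  also have "\<dots> \<le> expect_sum n (share_decrement c)"
    by (rule expect_sum_mono[where B=2])
       (auto intro: abs_share_decrement_le expect_shift_share_decrement_le assms
             abs_expect_shift_le[OF share_decrement_measurable abs_share_decrement_le])
  finally show "expect_sum (Suc n) (share c) - expect_sum n (share c)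
      \<le> expect_sum (Suc (Suc n)) (share c) - expect_sum (Suc n) (share c)"
    using expect_sum_share_diff[OF assms n] expect_sum_share_diff[OF assms, of "Suc n"] n by simp
qed

end

lemma (in finite_measure) pos_convex_decseq_set_integral:
  fixes f :: "nat \<Rightarrow> 'a \<Rightarrow> real"
  assumes A [measurable]: "A \<in> sets M" and A_nonnull: "emeasure M A \<noteq> 0"
    and [measurable]: "\<And>n. f n \<in> borel_measurable M"
    and bound: "\<And>n x. x \<in> A \<Longrightarrow> \<bar>f n x\<bar> \<le> B"
    and seq: "\<And>x. x \<in> A \<Longrightarrow> pos_convex_decseq (\<lambda>n. f n x)"
  shows "pos_convex_decseq (\<lambda>n. LINT x:A|M. f n x)"
proof -
  have int: "set_integrable M A (f n)" for n
    unfolding set_integrable_def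
  proof (rule integrable_const_bound[where B="\<bar>B\<bar>"])
    show "AE x in M. norm (indicator A x *\<^sub>R f n x) \<le> \<bar>B\<bar>"
      by (auto intro!: AE_I2 order_trans[OF bound] split: split_indicator)
  qed measurable
  have less: "(LINT x:A|M. g x) < (LINT x:A|M. h x)"
    if "set_integrable M A g" "set_integrable M A h" and gh: "\<And>x. x \<in> A \<Longrightarrow> g x < h x"
    for g h :: "'a \<Rightarrow> real"
    using that(1,2) A A_nonnull unfolding set_integrable_def set_lebesgue_integral_def
    by (intro integral_less_AE[where A=A])
       (auto intro!: AE_I2 less_imp_le[OF gh] dest: gh split: split_indicator)
  show ?thesis
  proof
    fix n :: nat assume n: "1 \<le> n"
    show "0 < (LINT x:A|M. f n x)"
      using less[of "\<lambda>_. 0" "f n"] int pos_convex_decseq.pos[OF seq n]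
      by (simp add: set_integrable_def)
    show "(LINT x:A|M. f (Suc n) x) < (LINT x:A|M. f n x)"
      using less int pos_convex_decseq.decreasing[OF seq n] by blast
    have "(LINT x:A|M. f (Suc n) x - f n x) \<le> (LINT x:A|M. f (Suc (Suc n)) x - f (Suc n) x)"
      using int pos_convex_decseq.convex[OF seq n] by (intro set_integral_mono) auto
    then show "(LINT x:A|M. f (Suc n) x) - (LINT x:A|M. f n x)
        \<le> (LINT x:A|M. f (Suc (Suc n)) x) - (LINT x:A|M. f (Suc n) x)"
      using int by simp
  qed
qed

locale importance_weights =
  fixes M :: "'a measure" and p q :: "'a \<Rightarrow> real"
  assumes p_measurable [measurable]: "p \<in> borel_measurable M"
    and q_measurable [measurable]: "q \<in> borel_measurable M"
    and p_integral: "(\<integral>\<^sup>+ x. ennreal (p x) \<partial>M) = 1"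
    and q_integral: "(\<integral>\<^sup>+ x. ennreal (q x) \<partial>M) = 1"
    and q_pos: "\<And>x. x \<in> space M \<Longrightarrow> 0 < p x \<Longrightarrow> 0 < q x"
begin

lemma iw_measurable [measurable]: "iw p q \<in> borel_measurable M"
  unfolding iw_def by measurable

lemma supp_p_sets [measurable]: "supp_p M p \<in> sets M"
  unfolding supp_p_def by measurable

lemma iw_pos: "x \<in> supp_p M p \<Longrightarrow> 0 < iw p q x"
  unfolding iw_def supp_p_def using q_pos by auto

lemma iw_pos_iff: "x \<in> space M \<Longrightarrow> 0 < iw p q x \<longleftrightarrow> x \<in> supp_p M p"
  using iw_pos unfolding iw_def supp_p_def by auto

lemma emeasure_target_supp_p: "emeasure (density M p) (supp_p M p) = 1"
proof -
  have "emeasure (density M p) (supp_p M p) = (\<integral>\<^sup>+ x. ennreal (p x) * indicator (supp_p M p) x \<partial>M)"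
    by (simp add: emeasure_density)
  also have "\<dots> = (\<integral>\<^sup>+ x. ennreal (p x) \<partial>M)"
    by (intro nn_integral_cong) (auto simp: supp_p_def ennreal_neg split: split_indicator)
  finally show ?thesis using p_integral by simp
qed

lemma emeasure_proposal_supp_p_nonnull: "emeasure (density M q) (supp_p M p) \<noteq> 0"
proof
  assume "emeasure (density M q) (supp_p M p) = 0"
  then have "supp_p M p \<in> null_sets (density M q)" by (intro null_setsI) auto
  then have "AE x in M. x \<in> supp_p M p \<longrightarrow> ennreal (q x) = 0"
    by (simp add: null_sets_density_iff)
  then have "AE x in M. x \<in> supp_p M p \<longrightarrow> ennreal (p x) = 0"
    by eventually_elim (use q_pos in \<open>force simp: supp_p_def\<close>)
  then have "supp_p M p \<in> null_sets (density M p)"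
    by (simp add: null_sets_density_iff)
  then have "emeasure (density M p) (supp_p M p) = 0" by auto
  then show False using emeasure_target_supp_p by simp
qed

sublocale weights: nonneg_weight "density M q" "iw p q"
proof (intro nonneg_weight.intro nonneg_weight_axioms.intro)
  show "prob_space (density M q)" by (rule prob_space_density) (auto simp: q_integral)
  show "iw p q \<in> borel_measurable (density M q)" by simp
  show "y \<in> space (density M q) \<Longrightarrow> 0 \<le> iw p q y" for y
    using q_pos[of y] by (auto simp: iw_def)
  have "{y \<in> space (density M q). 0 < iw p q y} = supp_p M p"
    using iw_pos_iff by (auto simp: supp_p_def)
  then show "emeasure (density M q) {y \<in> space (density M q). 0 < iw p q y} \<noteq> 0"
    using emeasure_proposal_supp_p_nonnull by simp
qed

lemma epsN_eq_expect_sum: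
  "x \<in> supp_p M p \<Longrightarrow> epsN M p q N x = weights.expect_sum N (share (iw p q x))"
  unfolding epsN_def weights.expect_sum_def share_def
  by (rule Bochner_Integration.integral_cong[OF refl]) (auto dest: weights.sum_W_nonneg)

lemma abs_epsN_le: "x \<in> supp_p M p \<Longrightarrow> \<bar>epsN M p q N x\<bar> \<le> 1"
  using weights.abs_expect_sum_le[OF share_measurable abs_share_le[OF iw_pos]]
  by (simp add: epsN_eq_expect_sum)

lemma pos_convex_decseq_epsN:
  "x \<in> supp_p M p \<Longrightarrow> pos_convex_decseq (\<lambda>N. epsN M p q N x)"
  using weights.pos_convex_decseq_expect_sum_share[OF iw_pos] by (simp add: epsN_eq_expect_sum)

lemma epsN_measurable [measurable]: "epsN M p q N \<in> borel_measurable M"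
proof -
  interpret S: prob_space "weights.sample {2..N}" by (rule weights.prob_space_sample)
  show ?thesis unfolding epsN_def by (rule S.borel_measurable_lebesgue_integral) measurable
qed

lemma pos_convex_decseq_epsAvgN: "pos_convex_decseq (epsAvgN M p q)"
proof -
  interpret target: prob_space "density M p"
    by (rule prob_space_density) (auto simp: p_integral)
  have "pos_convex_decseq (\<lambda>N. LINT x:supp_p M p|density M p. epsN M p q N x)"
    by (rule target.pos_convex_decseq_set_integral[where B=1])
       (auto simp: emeasure_target_supp_p intro: abs_epsN_le pos_convex_decseq_epsN)
  then show ?thesis by (simp add: epsAvgN_def[abs_def])
qed

end

lemma epsL_eq_lin_interp: "epsL M p q l x = lin_interp (\<lambda>N. epsN M p q N x) l"
  unfolding epsL_def lin_interp_def ..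

lemma epsAvgL_eq_lin_interp: "epsAvgL M p q = lin_interp (epsAvgN M p q)"
  unfolding epsAvgL_def[abs_def] lin_interp_def[abs_def] ..


theorem theorem6p12:
  fixes M :: "'a measure" and p q :: "'a \<Rightarrow> real"
  assumes "sigma_finite_measure M"
    and "p \<in> borel_measurable M" and "q \<in> borel_measurable M"
    and "\<And>x. x \<in> space M \<Longrightarrow> p x \<ge> 0"
    and "\<And>x. x \<in> space M \<Longrightarrow> q x \<ge> 0"
    and "(\<integral>\<^sup>+ x. ennreal (p x) \<partial>M) = 1"
    and "(\<integral>\<^sup>+ x. ennreal (q x) \<partial>M) = 1"
    and "\<And>x. x \<in> space M \<Longrightarrow> p x > 0 \<Longrightarrow> q x > 0"
  shows "(\<forall>l\<ge>1. epsAvgL M p q l > 0)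
       \<and> continuous_on {1..} (epsAvgL M p q)
       \<and> convex_on {1..} (epsAvgL M p q)
       \<and> (\<forall>a b. 1 \<le> a \<longrightarrow> a < b \<longrightarrow> epsAvgL M p q b < epsAvgL M p q a)
       \<and> (\<forall>x\<in>supp_p M p.
            (\<forall>l\<ge>1. epsL M p q l x > 0)
          \<and> continuous_on {1..} (\<lambda>l. epsL M p q l x)
          \<and> convex_on {1..} (\<lambda>l. epsL M p q l x)
          \<and> (\<forall>a b. 1 \<le> a \<longrightarrow> a < b \<longrightarrow> epsL M p q b x < epsL M p q a x))"
proof -
  interpret importance_weights M p q
    using assms(2,3,6-8) by unfold_locales
  have avg: "pos_convex_decseq (epsAvgN M p q)"
    by (rule pos_convex_decseq_epsAvgN)
  have pointwise: "pos_convex_decseq (\<lambda>N. epsN M p q N x)" if "x \<in> supp_p M p" for x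
    using that by (rule pos_convex_decseq_epsN)
  show ?thesis
    unfolding epsAvgL_eq_lin_interp epsL_eq_lin_interp
    using avg pointwise
    by (blast intro: pos_convex_decseq.lin_interp_pos pos_convex_decseq.continuous_on_lin_interp
        pos_convex_decseq.convex_on_lin_interp pos_convex_decseq.lin_interp_strict_antimono)
qed

end
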